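(* Let $m^*\ge m_*>0$ and $K\ge1$. If $G,\tilde G\in\mathbb{R}^{n\times K}$ satisfy $m_*I_K\preceq\frac1nG^TG\preceq m^*I_K$ and $m_*I_K\preceq\frac1n\tilde G^T\tilde G\preceq m^*I_K$, then $$\|(G^TG)^{-1/2}-(\tilde G^T\tilde G)^{-1/2}\|_F\le L_1n^{-1}\|G-\tilde G\|_F,\qquad\|G(G^TG)^{-1/2}-\tilde G(\tilde G^T\tilde G)^{-1/2}\|_F\le L_2n^{-1/2}\|G-\tilde G\|_F,$$ where $L_1,L_2>0$ depend only on $(K,m_*,m^* )$.
   Context: $A^{-1/2}$ denotes the inverse of the symmetric positive definite square root of $A$; $\preceq$ is the Loewner order. *)

theory Defs
  imports "Jordan_Normal_Form.Matrix"
begin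

definition psd_mat :: "real mat \<Rightarrow> bool" where
  "psd_mat A \<longleftrightarrow> A \<in> carrier_mat (dim_row A) (dim_row A) \<and> transpose_mat A = A \<and>
     (\<forall>v \<in> carrier_vec (dim_row A). scalar_prod v (A *\<^sub>v v) \<ge> 0)"

definition loewner_le :: "real mat \<Rightarrow> real mat \<Rightarrow> bool" where
  "loewner_le A B \<longleftrightarrow> A \<in> carrier_mat (dim_row B) (dim_row B) \<and>
     B \<in> carrier_mat (dim_row B) (dim_row B) \<and> psd_mat (B - A)"

definition mat_sqrt :: "real mat \<Rightarrow> real mat" where
  "mat_sqrt A = (THE B. B \<in> carrier_mat (dim_row A) (dim_row A) \<and> psd_mat B \<and> B * B = A)"

definition mat_inv :: "real mat \<Rightarrow> real mat" where
  "mat_inv A = (THE B. B \<in> carrier_mat (dim_row A) (dim_row A) \<and>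
      A * B = 1\<^sub>m (dim_row A) \<and> B * A = 1\<^sub>m (dim_row A))"

definition inv_sqrt_mat :: "real mat \<Rightarrow> real mat" where
  "inv_sqrt_mat A = mat_inv (mat_sqrt A)"

definition frob_norm :: "real mat \<Rightarrow> real" where
  "frob_norm A = sqrt (\<Sum>i<dim_row A. \<Sum>j<dim_col A. (A $$ (i, j))\<^sup>2)"

end

(*
  Write A = G^T G, B = Gt^T Gt, S = A^(1/2) and T = B^(1/2).  The hypotheses say that
  c^2 I <= A, B with c^2 = n m_lo, and that |G x| <= C |x| and |Gt x| <= C |x| with
  C^2 = n m_hi.  From A - B = G^T (G - Gt) + (G - Gt)^T Gt we get
  |A - B|_F <= 2 C |G - Gt|_F.  The square roots solve the Sylvester equation
  S (S - T) + (S - T) T = A - B, and pairing it with S - T in the Frobenius inner product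
  shows 2 c |S - T|_F <= |A - B|_F, because S, T >= c I.  Finally
  S^-1 - T^-1 = S^-1 (T - S) T^-1 with |S^-1|, |T^-1| <= 1/c gives the first bound with
  constant C / c^3, of order 1/n, and
  G S^-1 - Gt T^-1 = (G - Gt) S^-1 + Gt (S^-1 - T^-1) gives the second one.
  Existence of the square root rests on the spectral theorem for real symmetric matrices,
  proved by Householder deflation.
*)

theory Submission
  imports Defs "Jordan_Normal_Form.Char_Poly"
begin

section \<open>Spectral theorem for real symmetric matrices\<close>

lemma scalar_prod_self_nonneg: "0 \<le> (v :: real vec) \<bullet> v"
  by (simp add: scalar_prod_def sum_nonneg)

lemma scalar_prod_self_pos:
  assumes "(v :: real vec) \<in> carrier_vec n" and "v \<noteq> 0\<^sub>v n"
  shows "0 < v \<bullet> v"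
proof -
  obtain i where i: "i < n" "v $ i \<noteq> 0"
    using assms by (metis eq_vecI carrier_vecD index_zero_vec)
  have "v $ i * v $ i \<le> (\<Sum>j\<in>{0..<n}. v $ j * v $ j)"
    by (rule member_le_sum) (use i in auto)
  moreover have "0 < v $ i * v $ i"
    using i by (auto simp: zero_less_mult_iff linorder_neq_iff)
  ultimately show ?thesis
    using assms by (simp add: scalar_prod_def)
qed

lemma real_symmetric_mat_complex_eigenvalue_real:
  fixes A :: "real mat"
  assumes A: "A \<in> carrier_mat n n" and sym: "transpose_mat A = A"
    and w: "w \<in> carrier_vec n" "w \<noteq> 0\<^sub>v n"
    and eig: "map_mat complex_of_real A *\<^sub>v w = \<mu> \<cdot>\<^sub>v w"
  shows "\<mu> \<in> \<real>"
proof -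
  \<comment> \<open>\<open>s = w\<^sup>* A w\<close> is real by symmetry of \<open>A\<close> and equals \<open>\<mu> |w|\<^sup>2\<close>\<close>
  define s where "s = (\<Sum>i<n. \<Sum>j<n. cnj (w $ i) * of_real (A $$ (i, j)) * w $ j)"
  have row: "(\<Sum>j<n. of_real (A $$ (i, j)) * w $ j) = \<mu> * w $ i" if "i < n" for i
  proof -
    have "(map_mat complex_of_real A *\<^sub>v w) $ i = \<mu> * w $ i"
      using eig w that by simp
    then show ?thesis
      using A w that by (simp add: scalar_prod_def lessThan_atLeast0)
  qed
  have s_eq: "s = \<mu> * of_real (\<Sum>i<n. (cmod (w $ i))\<^sup>2)"
  proof -
    have "s = (\<Sum>i<n. cnj (w $ i) * (\<Sum>j<n. of_real (A $$ (i, j)) * w $ j))"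
      by (simp add: s_def sum_distrib_left mult.assoc)
    also have "\<dots> = (\<Sum>i<n. \<mu> * (w $ i * cnj (w $ i)))"
      by (intro sum.cong refl) (simp add: row)
    finally show ?thesis
      by (simp add: sum_distrib_left flip: complex_norm_square)
  qed
  have "cnj s = s"
  proof -
    have "cnj s = (\<Sum>i<n. \<Sum>j<n. w $ i * of_real (A $$ (i, j)) * cnj (w $ j))"
      by (simp add: s_def)
    also have "\<dots> = (\<Sum>j<n. \<Sum>i<n. cnj (w $ j) * of_real (A $$ (j, i)) * w $ i)"
    proof (subst sum.swap, intro sum.cong refl)
      fix i j assume "i \<in> {..<n}" "j \<in> {..<n}"
      then have "A $$ (i, j) = A $$ (j, i)"
        using A by (metis sym carrier_matD index_transpose_mat(1) lessThan_iff)
      then show "w $ i * of_real (A $$ (i, j)) * cnj (w $ j) = cnj (w $ j) * of_real (A $$ (j, i)) * w $ i"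
        by simp
    qed
    finally show ?thesis
      by (simp add: s_def)
  qed
  then have "s \<in> \<real>"
    by (simp add: Reals_cnj_iff)
  moreover have "0 < (\<Sum>i<n. (cmod (w $ i))\<^sup>2)"
  proof -
    obtain i where "i < n" "w $ i \<noteq> 0"
      using w by (metis eq_vecI carrier_vecD index_zero_vec)
    then show ?thesis
      by (intro sum_pos2[of _ i]) auto
  qed
  ultimately show ?thesis
    using s_eq by (metis Reals_divide Reals_of_real nonzero_mult_div_cancel_right of_real_eq_0_iff
        less_irrefl)
qed

lemma real_symmetric_mat_unit_eigenvector:
  fixes A :: "real mat"
  assumes A: "A \<in> carrier_mat n n" and sym: "transpose_mat A = A" and n: "0 < n"
  shows "\<exists>v l. v \<in> carrier_vec n \<and> v \<bullet> v = 1 \<and> A *\<^sub>v v = l \<cdot>\<^sub>v v"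
proof -
  let ?Ac = "map_mat complex_of_real A"
  have Ac: "?Ac \<in> carrier_mat n n"
    using A by simp
  obtain as where cp: "char_poly ?Ac = (\<Prod>a\<leftarrow>as. [:-a, 1:])" and "length as = n"
    using char_poly_factorized[OF Ac] by blast
  then obtain \<mu> where "\<mu> \<in> set as"
    using n by (cases as) auto
  then have "eigenvalue ?Ac \<mu>"
    unfolding eigenvalue_root_char_poly[OF Ac] cp poly_prod_list by (auto simp: prod_list_zero_iff)
  then obtain w where "w \<in> carrier_vec n" "w \<noteq> 0\<^sub>v n" "?Ac *\<^sub>v w = \<mu> \<cdot>\<^sub>v w"
    unfolding eigenvalue_def eigenvector_def using Ac by auto
  then have "\<mu> \<in> \<real>"
    by (rule real_symmetric_mat_complex_eigenvalue_real[OF A sym])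
  then obtain l where l: "\<mu> = of_real l"
    by (auto elim: Reals_cases)
  have "of_real (poly (char_poly A) l) = poly (char_poly ?Ac) \<mu>"
    unfolding l of_real_hom.char_poly_hom[OF A] by simp
  then have "eigenvalue A l"
    using \<open>eigenvalue ?Ac \<mu>\<close> by (simp add: eigenvalue_root_char_poly[OF A] eigenvalue_root_char_poly[OF Ac])
  then obtain v0 where v0: "v0 \<in> carrier_vec n" "v0 \<noteq> 0\<^sub>v n" "A *\<^sub>v v0 = l \<cdot>\<^sub>v v0"
    unfolding eigenvalue_def eigenvector_def using A by auto
  define v where "v = (1 / sqrt (v0 \<bullet> v0)) \<cdot>\<^sub>v v0"
  have "0 < v0 \<bullet> v0"
    using scalar_prod_self_pos[OF v0(1,2)] .
  then have "v \<bullet> v = 1"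
    using v0 by (simp add: v_def)
  moreover have "A *\<^sub>v v = l \<cdot>\<^sub>v v"
    using v0 A by (simp add: v_def mult_mat_vec[OF A v0(1)] smult_smult_assoc mult.commute)
  moreover have "v \<in> carrier_vec n"
    using v0 by (simp add: v_def)
  ultimately show ?thesis
    by blast
qed

definition householder_mat :: "real vec \<Rightarrow> real mat" where
  "householder_mat u = mat (dim_vec u) (dim_vec u)
     (\<lambda>(i, j). (if i = j then 1 else 0) - 2 / (u \<bullet> u) * (u $ i * u $ j))"

lemma dim_householder_mat [simp]:
  "dim_row (householder_mat u) = dim_vec u" "dim_col (householder_mat u) = dim_vec u"
  by (simp_all add: householder_mat_def)

lemma index_householder_mat:
  assumes "i < dim_vec u" and "j < dim_vec u"
  shows "householder_mat u $$ (i, j) = (if i = j then 1 else 0) - 2 / (u \<bullet> u) * (u $ i * u $ j)"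
  using assms by (simp add: householder_mat_def)

lemma transpose_householder_mat: "transpose_mat (householder_mat u) = householder_mat u"
  by (rule eq_matI) (auto simp: householder_mat_def)

lemma householder_mat_involution: "householder_mat u * householder_mat u = 1\<^sub>m (dim_vec u)"
proof (rule eq_matI)
  define N c where "N = dim_vec u" and "c = 2 / (u \<bullet> u)"
  have cc: "c * c * (u \<bullet> u) = 2 * c"
    by (cases "u \<bullet> u = 0") (auto simp: c_def)
  fix i j assume "i < dim_row (1\<^sub>m (dim_vec u))" "j < dim_col (1\<^sub>m (dim_vec u))"
  then have i: "i < N" and j: "j < N"
    by (auto simp: N_def)
  have "(householder_mat u * householder_mat u) $$ (i, j) =
      (\<Sum>k\<in>{0..<N}. householder_mat u $$ (i, k) * householder_mat u $$ (k, j))"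
    using i j by (simp add: scalar_prod_def N_def)
  also have "\<dots> = (\<Sum>k\<in>{0..<N}. (if i = k then (if k = j then 1 else 0) else 0)
      - c * u $ j * (if i = k then u $ k else 0) - c * u $ i * (if k = j then u $ k else 0)
      + c * c * u $ i * u $ j * (u $ k * u $ k))"
    using i j by (intro sum.cong refl) (simp add: index_householder_mat N_def c_def algebra_simps)
  also have "\<dots> = (\<Sum>k\<in>{0..<N}. (if i = k then (if k = j then 1 else 0) else 0))
      - c * u $ j * (\<Sum>k\<in>{0..<N}. (if i = k then u $ k else 0))
      - c * u $ i * (\<Sum>k\<in>{0..<N}. (if k = j then u $ k else 0))
      + c * c * u $ i * u $ j * (\<Sum>k\<in>{0..<N}. u $ k * u $ k)"
    by (simp only: sum.distrib sum_subtractf sum_distrib_left)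
  also have "\<dots> = (if i = j then 1 else 0) - 2 * c * u $ i * u $ j + c * c * (u \<bullet> u) * u $ i * u $ j"
    using i j by (simp add: scalar_prod_def N_def)
  also have "\<dots> = 1\<^sub>m (dim_vec u) $$ (i, j)"
    using cc i j by (simp add: N_def)
  finally show "(householder_mat u * householder_mat u) $$ (i, j) = 1\<^sub>m (dim_vec u) $$ (i, j)" .
qed (simp_all add: householder_mat_def)

text \<open>If \<open>v\<close> is the first unit vector, the reflection vector \<open>v - unit_vec n 0\<close> vanishes and the
  junk value \<open>2 / 0 = 0\<close> makes its Householder matrix the identity, as required.\<close>
lemma householder_mat_col_0:
  assumes v: "v \<in> carrier_vec n" "v \<bullet> v = 1" and n: "0 < n"
  shows "col (householder_mat (v - unit_vec n 0)) 0 = v"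
proof -
  define u where "u = v - unit_vec n 0"
  have u: "u \<in> carrier_vec n"
    using v by (simp add: u_def)
  have ui: "u $ i = v $ i - (if i = 0 then 1 else 0)" if "i < n" for i
    using that v by (simp add: u_def)
  have uu: "u \<bullet> u = 2 - 2 * v $ 0"
  proof -
    have "u \<bullet> u = (\<Sum>k\<in>{0..<n}. v $ k * v $ k - 2 * (if k = 0 then v $ k else 0) + (if k = 0 then 1 else 0))"
      using u by (auto simp: scalar_prod_def ui algebra_simps intro!: sum.cong)
    also have "\<dots> = v \<bullet> v - 2 * v $ 0 + 1"
      using v n by (simp add: scalar_prod_def sum.distrib sum_subtractf flip: sum_distrib_left)
    finally show ?thesis
      using v by simp
  qed
  show ?thesis
  proof (rule eq_vecI)
    fix i assume "i < dim_vec v"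
    then have i: "i < n"
      using v by simp
    have "col (householder_mat u) 0 $ i = (if i = 0 then 1 else 0) - 2 / (u \<bullet> u) * (u $ i * u $ 0)"
      using i n u by (simp add: index_householder_mat)
    also have "\<dots> = v $ i"
    proof (cases "v $ 0 = 1")
      case True
      then have "u = 0\<^sub>v n"
        using uu scalar_prod_self_pos[OF u] by force
      then show ?thesis
        using i ui[OF i] by simp
    next
      case False
      then have "2 / (u \<bullet> u) * u $ 0 = -1"
        using n by (simp add: uu ui field_simps)
      moreover have "2 / (u \<bullet> u) * (u $ i * u $ 0) = u $ i * (2 / (u \<bullet> u) * u $ 0)"
        by (simp only: mult_ac)
      ultimately show ?thesis
        using ui[OF i] by simp
    qed
    finally show "col (householder_mat (v - unit_vec n 0)) 0 $ i = v $ i"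
      by (simp add: u_def)
  qed (use v n in simp)
qed

lemma transpose_congruence:
  fixes Q M :: "real mat"
  assumes Q: "Q \<in> carrier_mat n k" and M: "M \<in> carrier_mat k k" and sym: "transpose_mat M = M"
  shows "transpose_mat (Q * M * transpose_mat Q) = Q * M * transpose_mat Q"
proof -
  have "transpose_mat (Q * M * transpose_mat Q) = transpose_mat (transpose_mat Q) * transpose_mat (Q * M)"
    by (rule transpose_mult) (use Q M in auto)
  also have "transpose_mat (Q * M) = transpose_mat M * transpose_mat Q"
    by (rule transpose_mult) (use Q M in auto)
  finally show ?thesis
    using Q M sym by (simp add: assoc_mult_mat[of _ n k _ k _ n])
qed

definition orthonormal_mat :: "nat \<Rightarrow> real mat \<Rightarrow> bool" where
  "orthonormal_mat n Q \<longleftrightarrow> Q \<in> carrier_mat n n \<and> transpose_mat Q * Q = 1\<^sub>m n"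

lemma orthonormal_mat_right_inverse:
  assumes "orthonormal_mat n Q"
  shows "Q * transpose_mat Q = 1\<^sub>m n"
  using assms mat_mult_left_right_inverse[of "transpose_mat Q" n Q]
  by (auto simp: orthonormal_mat_def)

lemma orthonormal_mat_transpose:
  assumes "orthonormal_mat n Q"
  shows "orthonormal_mat n (transpose_mat Q)"
  using assms orthonormal_mat_right_inverse[OF assms] by (simp add: orthonormal_mat_def)

lemma orthonormal_mat_mult:
  assumes P: "orthonormal_mat n P" and Q: "orthonormal_mat n Q"
  shows "orthonormal_mat n (P * Q)"
proof -
  have carr: "P \<in> carrier_mat n n" "Q \<in> carrier_mat n n"
    using P Q by (auto simp: orthonormal_mat_def)
  have "transpose_mat (P * Q) * (P * Q) = transpose_mat Q * (transpose_mat P * P) * Q"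
    using carr by (simp add: transpose_mult assoc_mult_mat[of _ n n _ n _ n])
  then show ?thesis
    using carr P Q by (simp add: orthonormal_mat_def)
qed

lemma orthonormal_householder_mat:
  assumes "u \<in> carrier_vec n"
  shows "orthonormal_mat n (householder_mat u)"
proof -
  have n: "dim_vec u = n"
    using assms by simp
  then have "householder_mat u \<in> carrier_mat n n"
    by (intro carrier_matI) simp_all
  then show ?thesis
    using householder_mat_involution[of u] n by (simp add: orthonormal_mat_def transpose_householder_mat)
qed

lemma orthonormal_mat_four_block:
  assumes "orthonormal_mat m Q"
  shows "orthonormal_mat (Suc m) (four_block_mat (1\<^sub>m 1) (0\<^sub>m 1 m) (0\<^sub>m m 1) Q)"
proof -
  define F where "F = four_block_mat (1\<^sub>m 1) (0\<^sub>m 1 m) (0\<^sub>m m 1) Q"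
  have Q: "Q \<in> carrier_mat m m" "transpose_mat Q * Q = 1\<^sub>m m"
    using assms by (auto simp: orthonormal_mat_def)
  have "transpose_mat F = four_block_mat (1\<^sub>m 1) (0\<^sub>m 1 m) (0\<^sub>m m 1) (transpose_mat Q)"
    unfolding F_def by (subst transpose_four_block_mat) (use Q in auto)
  then have "transpose_mat F * F = 1\<^sub>m (Suc m)"
    using Q by (simp add: F_def mult_four_block_mat[of _ 1 1 _ m _ m _ _ 1 _ m])
  moreover have "F \<in> carrier_mat (Suc m) (Suc m)"
    using Q four_block_carrier_mat[of "1\<^sub>m 1" 1 1 Q m m] by (simp add: F_def)
  ultimately show ?thesis
    by (simp add: orthonormal_mat_def F_def)
qed

lemma mat_diag_Suc:
  "mat_diag (Suc m) d =
     four_block_mat (mat 1 1 (\<lambda>_. d 0)) (0\<^sub>m 1 m) (0\<^sub>m m 1) (mat_diag m (\<lambda>i. d (Suc i)))"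
  by (rule eq_matI) (auto simp: mat_diag_def)

lemma four_block_mat_conj_mat_diag:
  fixes Q :: "real mat"
  assumes "Q \<in> carrier_mat m m"
  defines "F \<equiv> four_block_mat (1\<^sub>m 1) (0\<^sub>m 1 m) (0\<^sub>m m 1) Q"
  shows "F * mat_diag (Suc m) d * transpose_mat F =
    four_block_mat (mat 1 1 (\<lambda>_. d 0)) (0\<^sub>m 1 m) (0\<^sub>m m 1) (Q * mat_diag m (\<lambda>i. d (Suc i)) * transpose_mat Q)"
proof -
  have "transpose_mat F = four_block_mat (1\<^sub>m 1) (0\<^sub>m 1 m) (0\<^sub>m m 1) (transpose_mat Q)"
    unfolding F_def by (subst transpose_four_block_mat) (use assms in auto)
  moreover have "F * mat_diag (Suc m) d =
      four_block_mat (mat 1 1 (\<lambda>_. d 0)) (0\<^sub>m 1 m) (0\<^sub>m m 1) (Q * mat_diag m (\<lambda>i. d (Suc i)))"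
    using assms unfolding F_def mat_diag_Suc
    by (simp add: mult_four_block_mat[of _ 1 1 _ m _ m _ _ 1 _ m] left_mult_zero_mat[OF mat_diag_dim])
  moreover have QD: "Q * mat_diag m (\<lambda>i. d (Suc i)) \<in> carrier_mat m m"
    and QDQ: "Q * mat_diag m (\<lambda>i. d (Suc i)) * transpose_mat Q \<in> carrier_mat m m"
    using assms by auto
  ultimately show ?thesis
    using assms by (simp add: mult_four_block_mat[of _ 1 1 _ m _ m _ _ 1 _ m] right_mult_zero_mat[OF QD]
        left_add_zero_mat[OF QDQ])
qed

lemma symmetric_mat_col_0_block:
  fixes B :: "real mat"
  assumes B: "B \<in> carrier_mat (Suc m) (Suc m)" and sym: "transpose_mat B = B"
    and col0: "col B 0 = l \<cdot>\<^sub>v unit_vec (Suc m) 0"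
  shows "B = four_block_mat (mat 1 1 (\<lambda>_. l)) (0\<^sub>m 1 m) (0\<^sub>m m 1) (mat m m (\<lambda>(i, j). B $$ (Suc i, Suc j)))"
proof (rule eq_matI)
  have Bi0: "B $$ (i, 0) = (if i = 0 then l else 0)" if "i < Suc m" for i
  proof -
    have "B $$ (i, 0) = col B 0 $ i"
      using B that by simp
    then show ?thesis
      using col0 that by simp
  qed
  have B0j: "B $$ (0, j) = (if j = 0 then l else 0)" if "j < Suc m" for j
  proof -
    have "B $$ (0, j) = transpose_mat B $$ (j, 0)"
      using B that by simp
    then show ?thesis
      using sym Bi0[OF that] by simp
  qed
  fix i j assume "i < dim_row (four_block_mat (mat 1 1 (\<lambda>_. l)) (0\<^sub>m 1 m) (0\<^sub>m m 1) (mat m m (\<lambda>(i, j). B $$ (Suc i, Suc j))))"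
    "j < dim_col (four_block_mat (mat 1 1 (\<lambda>_. l)) (0\<^sub>m 1 m) (0\<^sub>m m 1) (mat m m (\<lambda>(i, j). B $$ (Suc i, Suc j))))"
  then have "i < Suc m" "j < Suc m"
    by auto
  then show "B $$ (i, j) = four_block_mat (mat 1 1 (\<lambda>_. l)) (0\<^sub>m 1 m) (0\<^sub>m m 1) (mat m m (\<lambda>(i, j). B $$ (Suc i, Suc j))) $$ (i, j)"
    using Bi0 B0j by (cases i; cases j) auto
qed (use B in auto)

theorem real_symmetric_mat_spectral:
  fixes A :: "real mat"
  assumes "A \<in> carrier_mat n n" and "transpose_mat A = A"
  shows "\<exists>Q d. orthonormal_mat n Q \<and> A = Q * mat_diag n d * transpose_mat Q"
  using assms
proof (induction n arbitrary: A)
  case 0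
  then show ?case
    by (intro exI[of _ "1\<^sub>m 0"] exI) (auto simp: orthonormal_mat_def)
next
  case (Suc m)
  note A = Suc.prems(1) and sym = Suc.prems(2)
  obtain v l where v: "v \<in> carrier_vec (Suc m)" "v \<bullet> v = 1" and Av: "A *\<^sub>v v = l \<cdot>\<^sub>v v"
    using real_symmetric_mat_unit_eigenvector[OF A sym] by blast
  define H where "H = householder_mat (v - unit_vec (Suc m) 0)"
  have H_orth: "orthonormal_mat (Suc m) H"
    unfolding H_def by (rule orthonormal_householder_mat) (use v in simp)
  then have H: "H \<in> carrier_mat (Suc m) (Suc m)" "H * H = 1\<^sub>m (Suc m)"
    by (simp_all add: orthonormal_mat_def H_def transpose_householder_mat)
  have H_sym: "transpose_mat H = H"
    by (simp add: H_def transpose_householder_mat)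
  have H_col: "col H 0 = v"
    unfolding H_def by (rule householder_mat_col_0[OF v]) simp
  define B where "B = H * A * H"
  have B: "B \<in> carrier_mat (Suc m) (Suc m)"
    using H A by (simp add: B_def)
  have B_sym: "transpose_mat B = B"
    using transpose_congruence[OF H(1) A sym] H_sym by (simp add: B_def)
  have "col B 0 = (H * A) *\<^sub>v col H 0"
    unfolding B_def by (rule col_mult2) (use H A in auto)
  also have "\<dots> = l \<cdot>\<^sub>v (H *\<^sub>v col H 0)"
    using H A v Av H_col by (simp add: mult_mat_vec)
  also have "H *\<^sub>v col H 0 = col (H * H) 0"
    by (rule col_mult2[symmetric]) (use H in auto)
  finally have "col B 0 = l \<cdot>\<^sub>v unit_vec (Suc m) 0"
    using H by simp
  define B' where "B' = mat m m (\<lambda>(i, j). B $$ (Suc i, Suc j))"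
  have B_block: "B = four_block_mat (mat 1 1 (\<lambda>_. l)) (0\<^sub>m 1 m) (0\<^sub>m m 1) B'"
    unfolding B'_def by (rule symmetric_mat_col_0_block[OF B B_sym]) fact
  have "transpose_mat B' = B'"
    using B B_sym by (auto simp: B'_def intro!: eq_matI) (metis Suc_less_eq carrier_matD index_transpose_mat(1))
  then obtain Q' d' where Q': "orthonormal_mat m Q'" "B' = Q' * mat_diag m d' * transpose_mat Q'"
    using Suc.IH[of B'] by (auto simp: B'_def)
  define F where "F = four_block_mat (1\<^sub>m 1) (0\<^sub>m 1 m) (0\<^sub>m m 1) Q'"
  define d where "d i = (if i = 0 then l else d' (i - 1))" for i
  have F_orth: "orthonormal_mat (Suc m) F"
    unfolding F_def by (rule orthonormal_mat_four_block[OF Q'(1)])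
  have "B = F * mat_diag (Suc m) d * transpose_mat F"
    using Q' four_block_mat_conj_mat_diag[of Q' m d] by (simp add: B_block F_def d_def orthonormal_mat_def)
  moreover have "A = H * B * H"
  proof -
    have "H * B * H = (H * H) * A * (H * H)"
      using H(1) A by (simp add: B_def assoc_mult_mat[of _ "Suc m" "Suc m" _ "Suc m" _ "Suc m"])
    then show ?thesis
      using H A by simp
  qed
  moreover have F: "F \<in> carrier_mat (Suc m) (Suc m)"
    using F_orth by (simp add: orthonormal_mat_def)
  moreover have "transpose_mat (H * F) = transpose_mat F * H"
    using H F H_sym by (simp add: transpose_mult[of _ "Suc m" "Suc m"])
  ultimately have "A = (H * F) * mat_diag (Suc m) d * transpose_mat (H * F)"
    using H by (simp add: mult_carrier_mat[of _ "Suc m" "Suc m"] assoc_mult_mat[of _ "Suc m" "Suc m" _ "Suc m" _ "Suc m"])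
  then show ?case
    using orthonormal_mat_mult[OF H_orth F_orth] by blast
qed

section \<open>Loewner order and positive definite square roots\<close>

lemma smult_mat_mult_mat_vec:
  "v \<in> carrier_vec (dim_col A) \<Longrightarrow> (k \<cdot>\<^sub>m A) *\<^sub>v v = k \<cdot>\<^sub>v (A *\<^sub>v (v :: real vec))"
  by (rule eq_vecI) auto

lemma smult_smult_mat: "k \<cdot>\<^sub>m (l \<cdot>\<^sub>m A) = (k * l) \<cdot>\<^sub>m (A :: real mat)"
  by (rule eq_matI) auto

lemma one_smult_mat: "1 \<cdot>\<^sub>m A = (A :: real mat)"
  by (rule eq_matI) auto

lemma psd_mat_smult:
  assumes "psd_mat X" and k: "0 \<le> k"
  shows "psd_mat (k \<cdot>\<^sub>m X)"
proof -
  define n where "n = dim_row X"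
  have X: "X \<in> carrier_mat n n" and sym: "transpose_mat X = X"
    and ge: "\<forall>v\<in>carrier_vec n. 0 \<le> v \<bullet> (X *\<^sub>v v)"
    using assms(1) unfolding psd_mat_def n_def by auto
  have "transpose_mat (k \<cdot>\<^sub>m X) = k \<cdot>\<^sub>m transpose_mat X"
    by (rule eq_matI) auto
  then have "transpose_mat (k \<cdot>\<^sub>m X) = k \<cdot>\<^sub>m X"
    using sym by simp
  moreover have "0 \<le> v \<bullet> ((k \<cdot>\<^sub>m X) *\<^sub>v v)" if v: "v \<in> carrier_vec n" for v
  proof -
    have "v \<bullet> ((k \<cdot>\<^sub>m X) *\<^sub>v v) = k * (v \<bullet> (X *\<^sub>v v))"
      using X v by (simp add: smult_mat_mult_mat_vec)
    then show ?thesis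
      using ge v k by simp
  qed
  moreover have "k \<cdot>\<^sub>m X \<in> carrier_mat n n"
    using X by simp
  ultimately show ?thesis
    unfolding psd_mat_def by (simp add: n_def)
qed

lemma loewner_le_smult:
  assumes "loewner_le A B" and "0 \<le> k"
  shows "loewner_le (k \<cdot>\<^sub>m A) (k \<cdot>\<^sub>m B)"
proof -
  define n where "n = dim_row B"
  have A: "A \<in> carrier_mat n n" and B: "B \<in> carrier_mat n n" and psd: "psd_mat (B - A)"
    using assms(1) unfolding loewner_le_def n_def by auto
  have "k \<cdot>\<^sub>m B - k \<cdot>\<^sub>m A = k \<cdot>\<^sub>m (B - A)"
    by (rule eq_matI) (use A B in \<open>auto simp: right_diff_distrib\<close>)
  then have "psd_mat (k \<cdot>\<^sub>m B - k \<cdot>\<^sub>m A)"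
    using psd_mat_smult[OF psd assms(2)] by simp
  then show ?thesis
    using A B unfolding loewner_le_def by simp
qed

lemma loewner_le_scalar_left_iff:
  fixes A :: "real mat"
  assumes A: "A \<in> carrier_mat n n"
  shows "loewner_le (c \<cdot>\<^sub>m 1\<^sub>m n) A \<longleftrightarrow>
    transpose_mat A = A \<and> (\<forall>x\<in>carrier_vec n. c * (x \<bullet> x) \<le> x \<bullet> (A *\<^sub>v x))"
proof -
  have "transpose_mat (A - c \<cdot>\<^sub>m 1\<^sub>m n) = transpose_mat A - c \<cdot>\<^sub>m 1\<^sub>m n"
    by (rule eq_matI) (use A in auto)
  then have sym: "transpose_mat (A - c \<cdot>\<^sub>m 1\<^sub>m n) = A - c \<cdot>\<^sub>m 1\<^sub>m n \<longleftrightarrow> transpose_mat A = A"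
    using A by (auto simp: mat_eq_iff) metis
  have quad: "x \<bullet> ((A - c \<cdot>\<^sub>m 1\<^sub>m n) *\<^sub>v x) = x \<bullet> (A *\<^sub>v x) - c * (x \<bullet> x)"
    if "x \<in> carrier_vec n" for x
    using A that by (simp add: minus_mult_distrib_mat_vec[of _ n n] smult_mat_mult_mat_vec
        scalar_prod_minus_distrib[of _ n])
  have "loewner_le (c \<cdot>\<^sub>m 1\<^sub>m n) A \<longleftrightarrow>
      transpose_mat (A - c \<cdot>\<^sub>m 1\<^sub>m n) = A - c \<cdot>\<^sub>m 1\<^sub>m n \<and>
      (\<forall>x\<in>carrier_vec n. 0 \<le> x \<bullet> ((A - c \<cdot>\<^sub>m 1\<^sub>m n) *\<^sub>v x))"
    using A by (simp add: loewner_le_def psd_mat_def minus_carrier_mat)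
  then show ?thesis
    by (simp add: sym quad)
qed

lemma loewner_le_scalar_right_iff:
  fixes A :: "real mat"
  assumes A: "A \<in> carrier_mat n n"
  shows "loewner_le A (c \<cdot>\<^sub>m 1\<^sub>m n) \<longleftrightarrow>
    transpose_mat A = A \<and> (\<forall>x\<in>carrier_vec n. x \<bullet> (A *\<^sub>v x) \<le> c * (x \<bullet> x))"
proof -
  have "transpose_mat (c \<cdot>\<^sub>m 1\<^sub>m n - A) = c \<cdot>\<^sub>m 1\<^sub>m n - transpose_mat A"
    by (rule eq_matI) (use A in auto)
  then have sym: "transpose_mat (c \<cdot>\<^sub>m 1\<^sub>m n - A) = c \<cdot>\<^sub>m 1\<^sub>m n - A \<longleftrightarrow> transpose_mat A = A"
    using A by (auto simp: mat_eq_iff) metis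
  have quad: "x \<bullet> ((c \<cdot>\<^sub>m 1\<^sub>m n - A) *\<^sub>v x) = c * (x \<bullet> x) - x \<bullet> (A *\<^sub>v x)"
    if "x \<in> carrier_vec n" for x
    using A that by (simp add: minus_mult_distrib_mat_vec[of _ n n] smult_mat_mult_mat_vec
        scalar_prod_minus_distrib[of _ n])
  have "loewner_le A (c \<cdot>\<^sub>m 1\<^sub>m n) \<longleftrightarrow>
      transpose_mat (c \<cdot>\<^sub>m 1\<^sub>m n - A) = c \<cdot>\<^sub>m 1\<^sub>m n - A \<and>
      (\<forall>x\<in>carrier_vec n. 0 \<le> x \<bullet> ((c \<cdot>\<^sub>m 1\<^sub>m n - A) *\<^sub>v x))"
    using A by (simp add: loewner_le_def psd_mat_def minus_carrier_mat)
  then show ?thesis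
    by (simp add: sym quad)
qed

lemma scalar_prod_congruence:
  fixes Q M :: "real mat"
  assumes Q: "Q \<in> carrier_mat n k" and M: "M \<in> carrier_mat n n" and x: "x \<in> carrier_vec k"
  shows "x \<bullet> ((transpose_mat Q * M * Q) *\<^sub>v x) = (Q *\<^sub>v x) \<bullet> (M *\<^sub>v (Q *\<^sub>v x))"
proof -
  have "(transpose_mat Q * M * Q) *\<^sub>v x = (transpose_mat Q * M) *\<^sub>v (Q *\<^sub>v x)"
    by (rule assoc_mult_mat_vec) (use Q M x in auto)
  also have "\<dots> = transpose_mat Q *\<^sub>v (M *\<^sub>v (Q *\<^sub>v x))"
    by (rule assoc_mult_mat_vec) (use Q M x in auto)
  finally have "(transpose_mat Q * M * Q) *\<^sub>v x = transpose_mat Q *\<^sub>v (M *\<^sub>v (Q *\<^sub>v x))" .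
  moreover have "(transpose_mat Q *\<^sub>v (M *\<^sub>v (Q *\<^sub>v x))) \<bullet> x = (M *\<^sub>v (Q *\<^sub>v x)) \<bullet> (Q *\<^sub>v x)"
    by (rule transpose_vec_mult_scalar[of Q n k]) (use Q M x in auto)
  ultimately show ?thesis
    using Q M x by (metis comm_scalar_prod mult_mat_vec_carrier transpose_carrier_mat)
qed

lemma scalar_prod_gram:
  fixes G :: "real mat"
  assumes "G \<in> carrier_mat n k" and "x \<in> carrier_vec k"
  shows "x \<bullet> ((transpose_mat G * G) *\<^sub>v x) = (G *\<^sub>v x) \<bullet> (G *\<^sub>v x)"
  using scalar_prod_congruence[OF assms(1) one_carrier_mat assms(2)] assms by simp

lemma loewner_le_scalar_orthonormal_conj:
  assumes Q: "orthonormal_mat n Q" and M: "M \<in> carrier_mat n n" and le: "loewner_le (c \<cdot>\<^sub>m 1\<^sub>m n) M"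
  shows "loewner_le (c \<cdot>\<^sub>m 1\<^sub>m n) (Q * M * transpose_mat Q)"
proof -
  have Qc: "Q \<in> carrier_mat n n" and QQ: "Q * transpose_mat Q = 1\<^sub>m n"
    using Q orthonormal_mat_right_inverse[OF Q] by (auto simp: orthonormal_mat_def)
  have M_sym: "transpose_mat M = M" and M_ge: "\<forall>y\<in>carrier_vec n. c * (y \<bullet> y) \<le> y \<bullet> (M *\<^sub>v y)"
    using le loewner_le_scalar_left_iff[OF M] by auto
  have "transpose_mat (Q * M * transpose_mat Q) = Q * M * transpose_mat Q"
    by (rule transpose_congruence[OF Qc M M_sym])
  moreover have "c * (x \<bullet> x) \<le> x \<bullet> ((Q * M * transpose_mat Q) *\<^sub>v x)" if x: "x \<in> carrier_vec n" for x
  proof -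
    let ?y = "transpose_mat Q *\<^sub>v x"
    have "x \<bullet> x = ?y \<bullet> ?y"
      using scalar_prod_gram[of "transpose_mat Q" n n x] Qc QQ x by simp
    moreover have "x \<bullet> ((Q * M * transpose_mat Q) *\<^sub>v x) = ?y \<bullet> (M *\<^sub>v ?y)"
      using scalar_prod_congruence[of "transpose_mat Q" n n M x] Qc M x by simp
    ultimately show ?thesis
      using M_ge Qc x by simp
  qed
  ultimately show ?thesis
    using Qc M by (simp add: loewner_le_scalar_left_iff)
qed

lemma mat_diag_mult_mat_vec:
  assumes "x \<in> carrier_vec n"
  shows "mat_diag n f *\<^sub>v x = vec n (\<lambda>i. f i * x $ i)"
proof (rule eq_vecI)
  fix i assume "i < dim_vec (vec n (\<lambda>i. f i * x $ i))"
  then have i: "i < n"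
    by simp
  have "(mat_diag n f *\<^sub>v x) $ i = (\<Sum>k\<in>{0..<n}. (if i = k then f k else 0) * x $ k)"
    using i assms by (simp add: mat_diag_def scalar_prod_def)
  also have "\<dots> = (\<Sum>k\<in>{0..<n}. if k = i then f i * x $ i else 0)"
    by (rule sum.cong) auto
  finally show "(mat_diag n f *\<^sub>v x) $ i = vec n (\<lambda>i. f i * x $ i) $ i"
    using i by simp
qed (simp add: mat_diag_def)

lemma loewner_le_scalar_mat_diag_iff:
  "loewner_le (c \<cdot>\<^sub>m 1\<^sub>m n) (mat_diag n f) \<longleftrightarrow> (\<forall>i<n. c \<le> (f i :: real))"
proof -
  have quad: "x \<bullet> (mat_diag n f *\<^sub>v x) = (\<Sum>i<n. f i * (x $ i)\<^sup>2)" if "x \<in> carrier_vec n" for x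
    using that by (simp add: mat_diag_mult_mat_vec scalar_prod_def lessThan_atLeast0 power2_eq_square
        algebra_simps)
  have norm: "x \<bullet> x = (\<Sum>i<n. (x $ i)\<^sup>2)" if "x \<in> carrier_vec n" for x :: "real vec"
    using that by (simp add: scalar_prod_def lessThan_atLeast0 power2_eq_square)
  have "(\<forall>x\<in>carrier_vec n. c * (x \<bullet> x) \<le> x \<bullet> (mat_diag n f *\<^sub>v x)) \<longleftrightarrow> (\<forall>i<n. c \<le> f i)"
  proof
    assume ge: "\<forall>x\<in>carrier_vec n. c * (x \<bullet> x) \<le> x \<bullet> (mat_diag n f *\<^sub>v x)"
    show "\<forall>i<n. c \<le> f i"
    proof (intro allI impI)
      fix i assume "i < n"
      then show "c \<le> f i"
        using ge[rule_format, of "unit_vec n i"] by (simp add: mat_diag_mult_mat_vec)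
    qed
  next
    assume "\<forall>i<n. c \<le> f i"
    then show "\<forall>x\<in>carrier_vec n. c * (x \<bullet> x) \<le> x \<bullet> (mat_diag n f *\<^sub>v x)"
      by (auto simp: quad norm sum_distrib_left intro!: sum_mono mult_right_mono)
  qed
  moreover have "transpose_mat (mat_diag n f) = mat_diag n f"
    by (auto simp: mat_eq_iff mat_diag_def)
  ultimately show ?thesis
    by (simp add: loewner_le_scalar_left_iff)
qed

lemma mat_diag_cong: "(\<And>i. i < n \<Longrightarrow> f i = g i) \<Longrightarrow> mat_diag n f = mat_diag n g"
  by (rule eq_matI) (auto simp: mat_diag_def)

lemma orthonormal_conj_mat_diag_mult:
  assumes Q: "orthonormal_mat n Q"
  shows "(Q * mat_diag n f * transpose_mat Q) * (Q * mat_diag n g * transpose_mat Q) =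
    Q * mat_diag n (\<lambda>i. f i * g i) * transpose_mat Q"
proof -
  have Qc: "Q \<in> carrier_mat n n" and QQ: "transpose_mat Q * Q = 1\<^sub>m n"
    using Q by (auto simp: orthonormal_mat_def)
  have "(Q * mat_diag n f * transpose_mat Q) * (Q * mat_diag n g * transpose_mat Q) =
      Q * mat_diag n f * (transpose_mat Q * Q) * mat_diag n g * transpose_mat Q"
    using Qc by (simp add: mult_carrier_mat[of _ n n] assoc_mult_mat[of _ n n _ n _ n])
  also have "\<dots> = Q * (mat_diag n f * mat_diag n g) * transpose_mat Q"
    using Qc QQ by (simp add: mult_carrier_mat[of _ n n] assoc_mult_mat[of _ n n _ n _ n]
        left_mult_one_mat[of _ n n] del: mat_diag_diag)
  finally show ?thesis
    by simp
qed

lemma pd_mat_sqrt_exists: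
  fixes A :: "real mat"
  assumes A: "A \<in> carrier_mat n n" and A_ge: "loewner_le (c\<^sup>2 \<cdot>\<^sub>m 1\<^sub>m n) A" and c: "0 < c"
  shows "\<exists>S R. S \<in> carrier_mat n n \<and> R \<in> carrier_mat n n \<and>
    loewner_le (c \<cdot>\<^sub>m 1\<^sub>m n) S \<and> S * S = A \<and> S * R = 1\<^sub>m n"
proof -
  have "transpose_mat A = A"
    using A_ge loewner_le_scalar_left_iff[OF A] by blast
  then obtain Q d where Q: "orthonormal_mat n Q" and A_eq: "A = Q * mat_diag n d * transpose_mat Q"
    using real_symmetric_mat_spectral[OF A] by blast
  have Qc: "Q \<in> carrier_mat n n" and QQ: "transpose_mat Q * Q = 1\<^sub>m n"
    using Q by (auto simp: orthonormal_mat_def)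
  have "transpose_mat Q * A * transpose_mat (transpose_mat Q) =
      (transpose_mat Q * Q) * mat_diag n d * (transpose_mat Q * Q)"
    using Qc by (simp add: A_eq mult_carrier_mat[of _ n n] assoc_mult_mat[of _ n n _ n _ n])
  then have "loewner_le (c\<^sup>2 \<cdot>\<^sub>m 1\<^sub>m n) (mat_diag n d)"
    using loewner_le_scalar_orthonormal_conj[OF orthonormal_mat_transpose[OF Q] A A_ge] QQ
    by (simp add: left_mult_one_mat[OF mat_diag_dim] right_mult_one_mat[OF mat_diag_dim])
  then have d: "c\<^sup>2 \<le> d i" if "i < n" for i
    using that loewner_le_scalar_mat_diag_iff by blast
  then have d_pos: "0 < d i" if "i < n" for i
    using that c by (meson less_le_trans zero_less_power)
  define S where "S = Q * mat_diag n (\<lambda>i. sqrt (d i)) * transpose_mat Q"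
  define R where "R = Q * mat_diag n (\<lambda>i. 1 / sqrt (d i)) * transpose_mat Q"
  have "S * S = A"
    unfolding S_def A_eq orthonormal_conj_mat_diag_mult[OF Q]
    by (rule arg_cong[where f = "\<lambda>D. Q * D * transpose_mat Q"], rule mat_diag_cong)
      (use d_pos in \<open>simp add: less_imp_le\<close>)
  moreover have "S * R = 1\<^sub>m n"
  proof -
    have "S * R = Q * mat_diag n (\<lambda>_. 1) * transpose_mat Q"
      unfolding S_def R_def orthonormal_conj_mat_diag_mult[OF Q]
      by (rule arg_cong[where f = "\<lambda>D. Q * D * transpose_mat Q"], rule mat_diag_cong)
        (use d_pos in fastforce)
    then show ?thesis
      using Qc orthonormal_mat_right_inverse[OF Q] by simp
  qed
  moreover have "loewner_le (c \<cdot>\<^sub>m 1\<^sub>m n) S"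
    unfolding S_def
  proof (rule loewner_le_scalar_orthonormal_conj[OF Q])
    show "loewner_le (c \<cdot>\<^sub>m 1\<^sub>m n) (mat_diag n (\<lambda>i. sqrt (d i)))"
      using d c by (simp add: loewner_le_scalar_mat_diag_iff real_le_rsqrt less_imp_le)
  qed simp
  moreover have "S \<in> carrier_mat n n" "R \<in> carrier_mat n n"
    using Qc by (simp_all add: S_def R_def mult_carrier_mat[of _ n n])
  ultimately show ?thesis
    by blast
qed

section \<open>Frobenius norm and operator norm bounds\<close>

lemma Cauchy_Schwarz_sum:
  fixes f g :: "'a \<Rightarrow> real"
  shows "(\<Sum>i\<in>I. f i * g i)\<^sup>2 \<le> (\<Sum>i\<in>I. (f i)\<^sup>2) * (\<Sum>i\<in>I. (g i)\<^sup>2)"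
proof -
  have fg: "(\<Sum>i\<in>I. \<Sum>j\<in>I. (f i)\<^sup>2 * (g j)\<^sup>2) = (\<Sum>i\<in>I. (f i)\<^sup>2) * (\<Sum>i\<in>I. (g i)\<^sup>2)"
    by (simp add: sum_product)
  have gf: "(\<Sum>i\<in>I. \<Sum>j\<in>I. (f j)\<^sup>2 * (g i)\<^sup>2) = (\<Sum>i\<in>I. (f i)\<^sup>2) * (\<Sum>i\<in>I. (g i)\<^sup>2)"
    unfolding fg[symmetric] by (rule sum.swap)
  have sq: "(\<Sum>i\<in>I. \<Sum>j\<in>I. (f i * g i) * (f j * g j)) = (\<Sum>i\<in>I. f i * g i)\<^sup>2"
    by (simp add: sum_product power2_eq_square)
  have "0 \<le> (\<Sum>i\<in>I. \<Sum>j\<in>I. (f i * g j - f j * g i)\<^sup>2)"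
    by (intro sum_nonneg) auto
  also have "\<dots> = (\<Sum>i\<in>I. \<Sum>j\<in>I. (f i)\<^sup>2 * (g j)\<^sup>2 + (f j)\<^sup>2 * (g i)\<^sup>2 - 2 * ((f i * g i) * (f j * g j)))"
    by (intro sum.cong refl) (simp add: power2_eq_square algebra_simps)
  also have "\<dots> = (\<Sum>i\<in>I. \<Sum>j\<in>I. (f i)\<^sup>2 * (g j)\<^sup>2) + (\<Sum>i\<in>I. \<Sum>j\<in>I. (f j)\<^sup>2 * (g i)\<^sup>2)
      - 2 * (\<Sum>i\<in>I. \<Sum>j\<in>I. (f i * g i) * (f j * g j))"
    by (simp only: sum.distrib sum_subtractf sum_distrib_left)
  finally show ?thesis
    unfolding fg gf sq by simp
qed

lemma scalar_prod_Cauchy_Schwarz: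
  fixes u v :: "real vec"
  assumes "u \<in> carrier_vec n" and "v \<in> carrier_vec n"
  shows "(u \<bullet> v)\<^sup>2 \<le> (u \<bullet> u) * (v \<bullet> v)"
  using Cauchy_Schwarz_sum[of "\<lambda>i. u $ i" "\<lambda>i. v $ i" "{0..<n}"] assms
  by (simp add: scalar_prod_def power2_eq_square)

definition frob_inner :: "real mat \<Rightarrow> real mat \<Rightarrow> real" where
  "frob_inner A B = (\<Sum>i<dim_row A. \<Sum>j<dim_col A. A $$ (i, j) * B $$ (i, j))"

lemma frob_norm_nonneg: "0 \<le> frob_norm A"
  by (simp add: frob_norm_def sum_nonneg)

lemma frob_norm_sq: "(frob_norm A)\<^sup>2 = frob_inner A A"
  by (simp add: frob_norm_def frob_inner_def sum_nonneg power2_eq_square)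

lemma frob_inner_cols:
  assumes "A \<in> carrier_mat r c" and "B \<in> carrier_mat r c"
  shows "frob_inner A B = (\<Sum>j<c. col A j \<bullet> col B j)"
  using assms unfolding frob_inner_def scalar_prod_def
  by (simp add: lessThan_atLeast0) (rule sum.swap)

lemma frob_inner_transpose:
  assumes "A \<in> carrier_mat r c" and "B \<in> carrier_mat r c"
  shows "frob_inner (transpose_mat A) (transpose_mat B) = frob_inner A B"
  using assms unfolding frob_inner_def by (simp add: sum.swap[of _ "{..<r}"])

lemma frob_norm_transpose: "frob_norm (transpose_mat A) = frob_norm A"
  unfolding frob_norm_def by (simp add: sum.swap[of _ "{..<dim_row A}"])

lemma frob_norm_minus_commute:
  assumes "A \<in> carrier_mat r c" and "B \<in> carrier_mat r c"
  shows "frob_norm (A - B) = frob_norm (B - A)"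
  using assms by (simp add: frob_norm_def power2_commute)

lemma frob_inner_commute:
  assumes "A \<in> carrier_mat r c" and "B \<in> carrier_mat r c"
  shows "frob_inner A B = frob_inner B A"
  using assms by (simp add: frob_inner_def mult.commute)

lemma frob_inner_add_left:
  assumes "A \<in> carrier_mat r c" and "B \<in> carrier_mat r c" and "C \<in> carrier_mat r c"
  shows "frob_inner (A + B) C = frob_inner A C + frob_inner B C"
  using assms by (simp add: frob_inner_def sum.distrib algebra_simps)

lemma frob_inner_le:
  assumes A: "A \<in> carrier_mat r c" and B: "B \<in> carrier_mat r c"
  shows "frob_inner A B \<le> frob_norm A * frob_norm B"
proof -
  have inner: "frob_inner X Y = (\<Sum>p\<in>{..<r} \<times> {..<c}. X $$ p * Y $$ p)"
    if "X \<in> carrier_mat r c" for X Y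
    using that by (simp add: frob_inner_def sum.cartesian_product)
  have "(frob_inner A B)\<^sup>2 \<le> frob_inner A A * frob_inner B B"
    using Cauchy_Schwarz_sum[of "\<lambda>p. A $$ p" "\<lambda>p. B $$ p" "{..<r} \<times> {..<c}"]
    unfolding inner[OF A] inner[OF B] by (simp add: power2_eq_square)
  also have "\<dots> = (frob_norm A * frob_norm B)\<^sup>2"
    by (simp add: power_mult_distrib frob_norm_sq)
  finally show ?thesis
    by (rule power2_le_imp_le) (simp add: frob_norm_nonneg)
qed

lemma frob_norm_triangle:
  assumes A: "A \<in> carrier_mat r c" and B: "B \<in> carrier_mat r c"
  shows "frob_norm (A + B) \<le> frob_norm A + frob_norm B"
proof -
  have AB: "A + B \<in> carrier_mat r c"
    using A B by simp
  have "(frob_norm (A + B))\<^sup>2 = frob_inner A (A + B) + frob_inner B (A + B)"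
    by (simp add: frob_norm_sq frob_inner_add_left[OF A B AB])
  also have "frob_inner A (A + B) = frob_inner A A + frob_inner B A"
    using frob_inner_commute[OF A AB] frob_inner_add_left[OF A B A] by simp
  also have "frob_inner B (A + B) = frob_inner A B + frob_inner B B"
    using frob_inner_commute[OF B AB] frob_inner_add_left[OF A B B] by simp
  also have "frob_inner B A = frob_inner A B"
    by (rule frob_inner_commute[OF B A])
  also have "frob_inner A A + frob_inner A B + (frob_inner A B + frob_inner B B) \<le>
      (frob_norm A + frob_norm B)\<^sup>2"
    using frob_inner_le[OF A B] by (simp add: power2_sum flip: frob_norm_sq)
  finally show ?thesis
    by (rule power2_le_imp_le) (simp add: frob_norm_nonneg add_nonneg_nonneg)
qed

lemma frob_norm_eq_0:
  assumes A: "A \<in> carrier_mat r c" and "frob_norm A = 0"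
  shows "A = 0\<^sub>m r c"
proof (rule eq_matI)
  fix i j assume ij: "i < dim_row (0\<^sub>m r c)" "j < dim_col (0\<^sub>m r c)"
  have "(\<Sum>p\<in>{..<r} \<times> {..<c}. (A $$ p)\<^sup>2) = 0"
    using assms by (simp add: frob_norm_def sum.cartesian_product sum_nonneg)
  then have "(A $$ (i, j))\<^sup>2 = 0"
    using ij by (subst (asm) sum_nonneg_eq_0_iff) auto
  then show "A $$ (i, j) = 0\<^sub>m r c $$ (i, j)"
    using ij by simp
qed (use A in auto)

definition op_norm_le :: "real mat \<Rightarrow> real \<Rightarrow> bool" where
  "op_norm_le M L \<longleftrightarrow> 0 \<le> L \<and> (\<forall>x\<in>carrier_vec (dim_col M). (M *\<^sub>v x) \<bullet> (M *\<^sub>v x) \<le> L\<^sup>2 * (x \<bullet> x))"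

lemma op_norm_le_transpose:
  assumes M: "M \<in> carrier_mat r c" and le: "op_norm_le M L"
  shows "op_norm_le (transpose_mat M) L"
  unfolding op_norm_le_def
proof (intro conjI ballI)
  show "0 \<le> L"
    using le by (simp add: op_norm_le_def)
  fix y :: "real vec" assume "y \<in> carrier_vec (dim_col (transpose_mat M))"
  then have y: "y \<in> carrier_vec r"
    using M by simp
  define z where "z = transpose_mat M *\<^sub>v y"
  have z: "z \<in> carrier_vec c"
    using M y by (simp add: z_def)
  have "(z \<bullet> z)\<^sup>2 = (y \<bullet> (M *\<^sub>v z))\<^sup>2"
    unfolding z_def by (subst transpose_vec_mult_scalar[of M r c]) (use M y z z_def in auto)
  also have "\<dots> \<le> (y \<bullet> y) * ((M *\<^sub>v z) \<bullet> (M *\<^sub>v z))"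
    using scalar_prod_Cauchy_Schwarz[OF y, of "M *\<^sub>v z"] M z by simp
  also have "\<dots> \<le> (y \<bullet> y) * (L\<^sup>2 * (z \<bullet> z))"
    using le M z scalar_prod_self_nonneg[of y] by (intro mult_left_mono) (auto simp: op_norm_le_def)
  finally have "(z \<bullet> z) * (z \<bullet> z) \<le> (L\<^sup>2 * (y \<bullet> y)) * (z \<bullet> z)"
    by (simp add: power2_eq_square algebra_simps)
  then show "(transpose_mat M *\<^sub>v y) \<bullet> (transpose_mat M *\<^sub>v y) \<le> L\<^sup>2 * (y \<bullet> y)"
    using scalar_prod_self_nonneg[of z] scalar_prod_self_nonneg[of y]
    by (cases "z \<bullet> z = 0") (auto simp: z_def)
qed

lemma frob_norm_mult_left_le:
  assumes M: "M \<in> carrier_mat r' r" and X: "X \<in> carrier_mat r c" and le: "op_norm_le M L"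
  shows "frob_norm (M * X) \<le> L * frob_norm X"
proof -
  have "(frob_norm (M * X))\<^sup>2 = (\<Sum>j<c. (M *\<^sub>v col X j) \<bullet> (M *\<^sub>v col X j))"
    using M X by (simp add: frob_norm_sq frob_inner_cols[of _ r' c] mult_mat_vec_def)
  also have "\<dots> \<le> (\<Sum>j<c. L\<^sup>2 * (col X j \<bullet> col X j))"
    using le M X by (intro sum_mono) (auto simp: op_norm_le_def)
  also have "\<dots> = (L * frob_norm X)\<^sup>2"
    using X by (simp add: power_mult_distrib frob_norm_sq frob_inner_cols[of _ r c] sum_distrib_left)
  finally show ?thesis
    by (rule power2_le_imp_le) (use le frob_norm_nonneg[of X] in \<open>simp add: op_norm_le_def\<close>)
qed

lemma frob_norm_mult_right_le:
  assumes M: "M \<in> carrier_mat c c'" and X: "X \<in> carrier_mat r c" and le: "op_norm_le M L"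
  shows "frob_norm (X * M) \<le> L * frob_norm X"
proof -
  have "frob_norm (X * M) = frob_norm (transpose_mat M * transpose_mat X)"
    using M X by (simp add: transpose_mult[symmetric] frob_norm_transpose)
  also have "\<dots> \<le> L * frob_norm (transpose_mat X)"
    using M X op_norm_le_transpose[OF M le] by (intro frob_norm_mult_left_le[of _ c' c]) auto
  finally show ?thesis
    by (simp add: frob_norm_transpose)
qed

lemma op_norm_le_gram:
  assumes G: "G \<in> carrier_mat n k" and le: "loewner_le (transpose_mat G * G) (L\<^sup>2 \<cdot>\<^sub>m 1\<^sub>m k)"
    and L: "0 \<le> L"
  shows "op_norm_le G L"
  unfolding op_norm_le_def
proof (intro conjI ballI)
  fix x :: "real vec" assume "x \<in> carrier_vec (dim_col G)"
  then have x: "x \<in> carrier_vec k"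
    using G by simp
  have "transpose_mat G * G \<in> carrier_mat k k"
    using G by simp
  then have "x \<bullet> ((transpose_mat G * G) *\<^sub>v x) \<le> L\<^sup>2 * (x \<bullet> x)"
    using le x loewner_le_scalar_right_iff by blast
  then show "(G *\<^sub>v x) \<bullet> (G *\<^sub>v x) \<le> L\<^sup>2 * (x \<bullet> x)"
    by (simp only: scalar_prod_gram[OF G x])
qed (fact L)

lemma op_norm_le_inverse:
  assumes S: "S \<in> carrier_mat k k" and R: "R \<in> carrier_mat k k" and SR: "S * R = 1\<^sub>m k"
    and c: "0 < c" and ge: "\<forall>x\<in>carrier_vec k. c\<^sup>2 * (x \<bullet> x) \<le> (S *\<^sub>v x) \<bullet> (S *\<^sub>v x)"
  shows "op_norm_le R (1 / c)"
  unfolding op_norm_le_def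
proof (intro conjI ballI)
  fix y :: "real vec" assume "y \<in> carrier_vec (dim_col R)"
  then have y: "y \<in> carrier_vec k"
    using R by simp
  have "S *\<^sub>v (R *\<^sub>v y) = y"
    using S R y SR by (simp flip: assoc_mult_mat_vec)
  then have "c\<^sup>2 * ((R *\<^sub>v y) \<bullet> (R *\<^sub>v y)) \<le> y \<bullet> y"
    using ge R y by (metis mult_mat_vec_carrier)
  then show "(R *\<^sub>v y) \<bullet> (R *\<^sub>v y) \<le> (1 / c)\<^sup>2 * (y \<bullet> y)"
    using c by (simp add: field_simps)
qed (use c in simp)

lemma frob_inner_mult_left_ge:
  assumes M: "M \<in> carrier_mat r r" and X: "X \<in> carrier_mat r c" and le: "loewner_le (a \<cdot>\<^sub>m 1\<^sub>m r) M"
  shows "a * (frob_norm X)\<^sup>2 \<le> frob_inner (M * X) X"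
proof -
  have "a * (frob_norm X)\<^sup>2 = (\<Sum>j<c. a * (col X j \<bullet> col X j))"
    using X by (simp add: frob_norm_sq frob_inner_cols[of _ r c] sum_distrib_left)
  also have "\<dots> \<le> (\<Sum>j<c. col X j \<bullet> (M *\<^sub>v col X j))"
    using le loewner_le_scalar_left_iff[OF M] X by (intro sum_mono) auto
  also have "\<dots> = frob_inner (M * X) X"
    using M X by (simp add: frob_inner_cols[of _ r c] comm_scalar_prod[of _ r] mult_mat_vec_def)
  finally show ?thesis .
qed

lemma frob_inner_mult_right_ge:
  assumes M: "M \<in> carrier_mat c c" and X: "X \<in> carrier_mat r c" and le: "loewner_le (a \<cdot>\<^sub>m 1\<^sub>m c) M"
  shows "a * (frob_norm X)\<^sup>2 \<le> frob_inner (X * M) X"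
proof -
  have "transpose_mat M = M"
    using le loewner_le_scalar_left_iff[OF M] by blast
  then have "frob_inner (X * M) X = frob_inner (M * transpose_mat X) (transpose_mat X)"
    using M X by (simp add: frob_inner_transpose[symmetric, of _ r c] transpose_mult)
  then show ?thesis
    using frob_inner_mult_left_ge[OF M _ le, of "transpose_mat X"] X by (simp add: frob_norm_transpose)
qed

lemma frob_norm_sylvester_ge:
  assumes S: "S \<in> carrier_mat k k" and T: "T \<in> carrier_mat k k" and X: "X \<in> carrier_mat k k"
    and S_ge: "loewner_le (a \<cdot>\<^sub>m 1\<^sub>m k) S" and T_ge: "loewner_le (b \<cdot>\<^sub>m 1\<^sub>m k) T"
  shows "(a + b) * frob_norm X \<le> frob_norm (S * X + X * T)"
proof (cases "frob_norm X = 0")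
  case False
  have "(a + b) * frob_norm X * frob_norm X = a * (frob_norm X)\<^sup>2 + b * (frob_norm X)\<^sup>2"
    by (simp add: power2_eq_square algebra_simps)
  also have "\<dots> \<le> frob_inner (S * X) X + frob_inner (X * T) X"
    using frob_inner_mult_left_ge[OF S X S_ge] frob_inner_mult_right_ge[OF T X T_ge] by linarith
  also have "\<dots> = frob_inner (S * X + X * T) X"
    using S T X by (simp add: frob_inner_add_left[of _ k k])
  also have "\<dots> \<le> frob_norm (S * X + X * T) * frob_norm X"
    using S T X by (intro frob_inner_le[of _ k k]) auto
  finally show ?thesis
    using False frob_norm_nonneg[of X] by (simp add: less_le)
qed (simp add: frob_norm_nonneg)

section \<open>Perturbation of the inverse square root\<close>

lemma sylvester_identity:
  fixes S T :: "real mat"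
  assumes "S \<in> carrier_mat n n" and "T \<in> carrier_mat n n"
  shows "S * (S - T) + (S - T) * T = S * S - T * T"
proof -
  have "S * (S - T) = S * S - S * T"
    by (rule mult_minus_distrib_mat) (use assms in auto)
  moreover have "(S - T) * T = S * T - T * T"
    by (rule minus_mult_distrib_mat) (use assms in auto)
  ultimately show ?thesis
    by (simp, intro eq_matI) (use assms in auto)
qed

lemma mat_sqrt_eqI:
  fixes S :: "real mat"
  assumes S: "S \<in> carrier_mat n n" and S_ge: "loewner_le (c \<cdot>\<^sub>m 1\<^sub>m n) S" and c: "0 < c"
    and SS: "S * S = A"
  shows "mat_sqrt A = S"
proof -
  have A: "A \<in> carrier_mat n n"
    using S SS by auto
  have S_sym: "transpose_mat S = S" and S_quad: "\<forall>x\<in>carrier_vec n. c * (x \<bullet> x) \<le> x \<bullet> (S *\<^sub>v x)"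
    using S_ge loewner_le_scalar_left_iff[OF S] by auto
  have "0 \<le> x \<bullet> (S *\<^sub>v x)" if "x \<in> carrier_vec n" for x
    using S_quad that c scalar_prod_self_nonneg[of x] by (meson order_trans mult_nonneg_nonneg less_imp_le)
  then have psd: "psd_mat S"
    unfolding psd_mat_def using S S_sym by simp
  have uniq: "B = S" if B: "B \<in> carrier_mat n n" "psd_mat B" "B * B = A" for B
  proof -
    have "loewner_le (0 \<cdot>\<^sub>m 1\<^sub>m n) B"
      using B loewner_le_scalar_left_iff[OF B(1)] by (auto simp: psd_mat_def)
    then have "(c + 0) * frob_norm (S - B) \<le> frob_norm (S * (S - B) + (S - B) * B)"
      using S B by (intro frob_norm_sylvester_ge[OF S B(1) _ S_ge]) auto
    also have "S * (S - B) + (S - B) * B = 0\<^sub>m n n"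
      using sylvester_identity[OF S B(1)] SS B(3) A by simp
    finally have "frob_norm (S - B) = 0"
      using c frob_norm_nonneg[of "S - B"] by (simp add: frob_norm_def mult_le_0_iff)
    then have zero: "S - B = 0\<^sub>m n n"
      using B(1) by (intro frob_norm_eq_0) (auto simp: minus_carrier_mat)
    show "B = S"
    proof (rule eq_matI)
      fix i j assume ij: "i < dim_row S" "j < dim_col S"
      then have "(S - B) $$ (i, j) = 0"
        using zero S by simp
      then show "B $$ (i, j) = S $$ (i, j)"
        using ij S B(1) by simp
    qed (use S B(1) in auto)
  qed
  show ?thesis
    unfolding mat_sqrt_def
  proof (rule the_equality)
    show "S \<in> carrier_mat (dim_row A) (dim_row A) \<and> psd_mat S \<and> S * S = A"
      using S A psd SS by simp
    show "B = S" if "B \<in> carrier_mat (dim_row A) (dim_row A) \<and> psd_mat B \<and> B * B = A" for B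
      using that uniq A by auto
  qed
qed

lemma mat_inv_eqI:
  fixes S R :: "real mat"
  assumes S: "S \<in> carrier_mat n n" and R: "R \<in> carrier_mat n n" and SR: "S * R = 1\<^sub>m n"
  shows "mat_inv S = R"
  unfolding mat_inv_def
proof (rule the_equality)
  have RS: "R * S = 1\<^sub>m n"
    by (rule mat_mult_left_right_inverse[OF S R SR])
  then show "R \<in> carrier_mat (dim_row S) (dim_row S) \<and> S * R = 1\<^sub>m (dim_row S) \<and> R * S = 1\<^sub>m (dim_row S)"
    using S R SR by simp
  fix R' assume "R' \<in> carrier_mat (dim_row S) (dim_row S) \<and> S * R' = 1\<^sub>m (dim_row S) \<and>
    R' * S = 1\<^sub>m (dim_row S)"
  then have R': "R' \<in> carrier_mat n n" "S * R' = 1\<^sub>m n"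
    using S by auto
  have "R' = (R * S) * R'"
    using RS R' by simp
  also have "\<dots> = R * (S * R')"
    using R S R' by (simp add: assoc_mult_mat[of _ n n _ n _ n])
  finally show "R' = R"
    using R R' by simp
qed

lemma mat_sqrt_pd:
  fixes A :: "real mat"
  assumes A: "A \<in> carrier_mat n n" and A_ge: "loewner_le (c\<^sup>2 \<cdot>\<^sub>m 1\<^sub>m n) A" and c: "0 < c"
  shows "mat_sqrt A \<in> carrier_mat n n" and "loewner_le (c \<cdot>\<^sub>m 1\<^sub>m n) (mat_sqrt A)"
    and "mat_sqrt A * mat_sqrt A = A" and "inv_sqrt_mat A \<in> carrier_mat n n"
    and "mat_sqrt A * inv_sqrt_mat A = 1\<^sub>m n"
proof -
  obtain S R where S: "S \<in> carrier_mat n n" and R: "R \<in> carrier_mat n n"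
    and S_ge: "loewner_le (c \<cdot>\<^sub>m 1\<^sub>m n) S" and SS: "S * S = A" and SR: "S * R = 1\<^sub>m n"
    using pd_mat_sqrt_exists[OF A A_ge c] by blast
  have sqrt_A: "mat_sqrt A = S"
    by (rule mat_sqrt_eqI[OF S S_ge c SS])
  have "inv_sqrt_mat A = R"
    unfolding inv_sqrt_mat_def sqrt_A by (rule mat_inv_eqI[OF S R SR])
  then show "mat_sqrt A \<in> carrier_mat n n" "loewner_le (c \<cdot>\<^sub>m 1\<^sub>m n) (mat_sqrt A)"
    "mat_sqrt A * mat_sqrt A = A" "inv_sqrt_mat A \<in> carrier_mat n n"
    "mat_sqrt A * inv_sqrt_mat A = 1\<^sub>m n"
    using S R S_ge SS SR by (simp_all add: sqrt_A)
qed

lemma op_norm_le_inv_sqrt_mat: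
  fixes A :: "real mat"
  assumes A: "A \<in> carrier_mat n n" and A_ge: "loewner_le (c\<^sup>2 \<cdot>\<^sub>m 1\<^sub>m n) A" and c: "0 < c"
  shows "op_norm_le (inv_sqrt_mat A) (1 / c)"
proof (rule op_norm_le_inverse[OF mat_sqrt_pd(1,4,5)[OF A A_ge c] c], intro ballI)
  fix x :: "real vec" assume x: "x \<in> carrier_vec n"
  note S = mat_sqrt_pd(1-3)[OF A A_ge c]
  have "transpose_mat (mat_sqrt A) = mat_sqrt A"
    using S(2) loewner_le_scalar_left_iff[OF S(1)] by blast
  then have "(mat_sqrt A *\<^sub>v x) \<bullet> (mat_sqrt A *\<^sub>v x) = x \<bullet> (A *\<^sub>v x)"
    using scalar_prod_gram[OF S(1) x] S(3) by simp
  moreover have "c\<^sup>2 * (x \<bullet> x) \<le> x \<bullet> (A *\<^sub>v x)"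
    using A_ge loewner_le_scalar_left_iff[OF A] x by blast
  ultimately show "c\<^sup>2 * (x \<bullet> x) \<le> (mat_sqrt A *\<^sub>v x) \<bullet> (mat_sqrt A *\<^sub>v x)"
    by simp
qed

lemma frob_norm_mat_sqrt_diff_le:
  fixes A B :: "real mat"
  assumes A: "A \<in> carrier_mat n n" and B: "B \<in> carrier_mat n n"
    and A_ge: "loewner_le (c\<^sup>2 \<cdot>\<^sub>m 1\<^sub>m n) A" and B_ge: "loewner_le (c\<^sup>2 \<cdot>\<^sub>m 1\<^sub>m n) B" and c: "0 < c"
  shows "2 * c * frob_norm (mat_sqrt A - mat_sqrt B) \<le> frob_norm (A - B)"
proof -
  note S = mat_sqrt_pd[OF A A_ge c] and T = mat_sqrt_pd[OF B B_ge c]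
  have "(c + c) * frob_norm (mat_sqrt A - mat_sqrt B) \<le>
      frob_norm (mat_sqrt A * (mat_sqrt A - mat_sqrt B) + (mat_sqrt A - mat_sqrt B) * mat_sqrt B)"
    using S(1) T(1) by (intro frob_norm_sylvester_ge[OF S(1) T(1) _ S(2) T(2)]) (simp add: minus_carrier_mat)
  then show ?thesis
    using sylvester_identity[OF S(1) T(1)] S(3) T(3) by simp
qed

lemma inverse_diff_eq:
  fixes R S T R' :: "real mat"
  assumes R: "R \<in> carrier_mat n n" and S: "S \<in> carrier_mat n n" and T: "T \<in> carrier_mat n n"
    and R': "R' \<in> carrier_mat n n" and RS: "R * S = 1\<^sub>m n" and TR': "T * R' = 1\<^sub>m n"
  shows "R - R' = R * (T - S) * R'"
proof -
  have "R * (T - S) * R' = (R * T - R * S) * R'"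
    using R S T by (simp add: mult_minus_distrib_mat[of _ n n])
  also have "\<dots> = R * T * R' - R * S * R'"
    using R S T R' by (simp add: minus_mult_distrib_mat[of _ n n])
  also have "R * T * R' = R"
    using R T R' TR' by (simp add: assoc_mult_mat[of _ n n _ n _ n])
  also have "R * S * R' = R'"
    using R' RS by simp
  finally show ?thesis
    by simp
qed

lemma frob_norm_inv_sqrt_mat_diff_le:
  fixes A B :: "real mat"
  assumes A: "A \<in> carrier_mat n n" and B: "B \<in> carrier_mat n n"
    and A_ge: "loewner_le (c\<^sup>2 \<cdot>\<^sub>m 1\<^sub>m n) A" and B_ge: "loewner_le (c\<^sup>2 \<cdot>\<^sub>m 1\<^sub>m n) B" and c: "0 < c"
  shows "2 * c ^ 3 * frob_norm (inv_sqrt_mat A - inv_sqrt_mat B) \<le> frob_norm (A - B)"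
proof -
  define S T R R' where "S = mat_sqrt A" and "T = mat_sqrt B"
    and "R = inv_sqrt_mat A" and "R' = inv_sqrt_mat B"
  have S: "S \<in> carrier_mat n n" "S * R = 1\<^sub>m n" and R: "R \<in> carrier_mat n n"
    using mat_sqrt_pd[OF A A_ge c] by (simp_all add: S_def R_def)
  have T: "T \<in> carrier_mat n n" "T * R' = 1\<^sub>m n" and R': "R' \<in> carrier_mat n n"
    using mat_sqrt_pd[OF B B_ge c] by (simp_all add: T_def R'_def)
  have RS: "R * S = 1\<^sub>m n"
    by (rule mat_mult_left_right_inverse[OF S(1) R S(2)])
  have "frob_norm (R - R') = frob_norm (R * (T - S) * R')"
    using inverse_diff_eq[OF R S(1) T(1) R' RS T(2)] by simp
  also have "\<dots> \<le> 1 / c * frob_norm (R * (T - S))"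
    using R R' S T op_norm_le_inv_sqrt_mat[OF B B_ge c]
    by (intro frob_norm_mult_right_le[of _ n n]) (auto simp: R'_def minus_carrier_mat)
  also have "\<dots> \<le> 1 / c * (1 / c * frob_norm (T - S))"
    using R S T op_norm_le_inv_sqrt_mat[OF A A_ge c] c
    by (intro mult_left_mono frob_norm_mult_left_le[of _ n n]) (auto simp: R_def minus_carrier_mat)
  also have "frob_norm (T - S) = frob_norm (S - T)"
    by (rule frob_norm_minus_commute[OF T(1) S(1)])
  finally have "2 * c ^ 3 * frob_norm (R - R') \<le> 2 * c * frob_norm (S - T)"
    using c by (simp add: field_simps power3_eq_cube)
  also have "\<dots> \<le> frob_norm (A - B)"
    unfolding S_def T_def by (rule frob_norm_mat_sqrt_diff_le[OF A B A_ge B_ge c])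
  finally show ?thesis
    by (simp add: R_def R'_def)
qed

lemma gram_diff_eq:
  fixes G G' :: "real mat"
  assumes G: "G \<in> carrier_mat n k" and G': "G' \<in> carrier_mat n k"
  shows "transpose_mat G * G - transpose_mat G' * G' =
    transpose_mat G * (G - G') + transpose_mat (G - G') * G'"
proof -
  have "transpose_mat G * (G - G') = transpose_mat G * G - transpose_mat G * G'"
    by (rule mult_minus_distrib_mat) (use G G' in auto)
  moreover have "transpose_mat (G - G') * G' = transpose_mat G * G' - transpose_mat G' * G'"
    using G G' by (simp add: transpose_minus minus_mult_distrib_mat[of _ k n])
  ultimately show ?thesis
    by (simp, intro eq_matI) (use G G' in auto)
qed

lemma frob_norm_gram_diff_le:
  fixes G G' :: "real mat"
  assumes G: "G \<in> carrier_mat n k" and G': "G' \<in> carrier_mat n k"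
    and "op_norm_le G L" and "op_norm_le G' L"
  shows "frob_norm (transpose_mat G * G - transpose_mat G' * G') \<le> 2 * L * frob_norm (G - G')"
proof -
  have D: "G - G' \<in> carrier_mat n k"
    using G' by (simp add: minus_carrier_mat)
  have "frob_norm (transpose_mat G * G - transpose_mat G' * G') \<le>
      frob_norm (transpose_mat G * (G - G')) + frob_norm (transpose_mat (G - G') * G')"
    unfolding gram_diff_eq[OF G G'] using G G' D by (intro frob_norm_triangle[of _ k k]) auto
  also have "frob_norm (transpose_mat G * (G - G')) \<le> L * frob_norm (G - G')"
    using G D op_norm_le_transpose[OF G assms(3)] by (intro frob_norm_mult_left_le[of _ k n]) auto
  also have "frob_norm (transpose_mat (G - G') * G') \<le> L * frob_norm (G - G')"
    using G' D assms(4) frob_norm_mult_right_le[of G' n k "transpose_mat (G - G')" k L]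
    by (simp add: frob_norm_transpose)
  finally show ?thesis
    by simp
qed

lemma frob_norm_inv_sqrt_gram_diff_le:
  fixes G G' :: "real mat"
  assumes G: "G \<in> carrier_mat n k" and G': "G' \<in> carrier_mat n k"
    and G_ge: "loewner_le (c\<^sup>2 \<cdot>\<^sub>m 1\<^sub>m k) (transpose_mat G * G)"
    and G'_ge: "loewner_le (c\<^sup>2 \<cdot>\<^sub>m 1\<^sub>m k) (transpose_mat G' * G')"
    and G_le: "op_norm_le G L" and G'_le: "op_norm_le G' L" and c: "0 < c"
  shows "frob_norm (inv_sqrt_mat (transpose_mat G * G) - inv_sqrt_mat (transpose_mat G' * G'))
    \<le> L / c ^ 3 * frob_norm (G - G')"
proof -
  have "2 * c ^ 3 * frob_norm (inv_sqrt_mat (transpose_mat G * G) - inv_sqrt_mat (transpose_mat G' * G'))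
      \<le> 2 * L * frob_norm (G - G')"
    using frob_norm_inv_sqrt_mat_diff_le[OF _ _ G_ge G'_ge c] frob_norm_gram_diff_le[OF G G' G_le G'_le] G G'
    by fastforce
  then show ?thesis
    using c by (simp add: field_simps)
qed

lemma frob_norm_polar_factor_diff_le:
  fixes G G' :: "real mat"
  assumes G: "G \<in> carrier_mat n k" and G': "G' \<in> carrier_mat n k"
    and G_ge: "loewner_le (c\<^sup>2 \<cdot>\<^sub>m 1\<^sub>m k) (transpose_mat G * G)"
    and G'_ge: "loewner_le (c\<^sup>2 \<cdot>\<^sub>m 1\<^sub>m k) (transpose_mat G' * G')"
    and G_le: "op_norm_le G L" and G'_le: "op_norm_le G' L" and c: "0 < c"
  shows "frob_norm (G * inv_sqrt_mat (transpose_mat G * G) - G' * inv_sqrt_mat (transpose_mat G' * G'))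
    \<le> (1 / c + L\<^sup>2 / c ^ 3) * frob_norm (G - G')"
proof -
  define R R' where "R = inv_sqrt_mat (transpose_mat G * G)" and "R' = inv_sqrt_mat (transpose_mat G' * G')"
  have R: "R \<in> carrier_mat k k" and R': "R' \<in> carrier_mat k k"
    using mat_sqrt_pd(4)[OF _ G_ge c] mat_sqrt_pd(4)[OF _ G'_ge c] G G' by (simp_all add: R_def R'_def)
  have D: "G - G' \<in> carrier_mat n k"
    using G' by (simp add: minus_carrier_mat)
  have "G * R - G' * R' = (G - G') * R + G' * (R - R')"
    using G G' R R' by (simp add: minus_mult_distrib_mat[of _ n k] mult_minus_distrib_mat[of _ n k])
      (intro eq_matI, auto)
  then have "frob_norm (G * R - G' * R') \<le> frob_norm ((G - G') * R) + frob_norm (G' * (R - R'))"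
    using D G' R R' by (simp only:) (rule frob_norm_triangle[of _ n k], auto simp: minus_carrier_mat)
  also have "frob_norm ((G - G') * R) \<le> 1 / c * frob_norm (G - G')"
    using R D op_norm_le_inv_sqrt_mat[OF _ G_ge c] G by (intro frob_norm_mult_right_le[of _ k k]) (auto simp: R_def)
  also have "frob_norm (G' * (R - R')) \<le> L * frob_norm (R - R')"
    using G' R R' G'_le by (intro frob_norm_mult_left_le[of _ n k]) (auto simp: minus_carrier_mat)
  also have "L * frob_norm (R - R') \<le> L * (L / c ^ 3 * frob_norm (G - G'))"
    using frob_norm_inv_sqrt_gram_diff_le[OF G G' G_ge G'_ge G_le G'_le c] G_le
    by (intro mult_left_mono) (auto simp: R_def R'_def op_norm_le_def)
  finally show ?thesis
    by (simp add: R_def R'_def power2_eq_square algebra_simps)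
qed

lemma loewner_le_rescale:
  fixes P :: "real mat"
  assumes k: "0 < k"
  shows "loewner_le (a \<cdot>\<^sub>m 1\<^sub>m n) ((1 / k) \<cdot>\<^sub>m P) \<Longrightarrow> loewner_le ((k * a) \<cdot>\<^sub>m 1\<^sub>m n) P"
    and "loewner_le ((1 / k) \<cdot>\<^sub>m P) (a \<cdot>\<^sub>m 1\<^sub>m n) \<Longrightarrow> loewner_le P ((k * a) \<cdot>\<^sub>m 1\<^sub>m n)"
proof -
  have "k \<cdot>\<^sub>m ((1 / k) \<cdot>\<^sub>m P) = P" and "k \<cdot>\<^sub>m (a \<cdot>\<^sub>m 1\<^sub>m n) = (k * a) \<cdot>\<^sub>m 1\<^sub>m n"
    using k by (simp_all add: smult_smult_mat one_smult_mat)
  then show "loewner_le (a \<cdot>\<^sub>m 1\<^sub>m n) ((1 / k) \<cdot>\<^sub>m P) \<Longrightarrow> loewner_le ((k * a) \<cdot>\<^sub>m 1\<^sub>m n) P"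
    and "loewner_le ((1 / k) \<cdot>\<^sub>m P) (a \<cdot>\<^sub>m 1\<^sub>m n) \<Longrightarrow> loewner_le P ((k * a) \<cdot>\<^sub>m 1\<^sub>m n)"
    using loewner_le_smult[of _ _ k] k by (metis less_imp_le)+
qed

lemma inv_sqrt_gram_lipschitz:
  fixes G G' :: "real mat"
  assumes K: "1 \<le> K" and m: "0 < m_lo" "m_lo \<le> m_hi"
    and G: "G \<in> carrier_mat n K" and G': "G' \<in> carrier_mat n K"
    and G_lo: "loewner_le (m_lo \<cdot>\<^sub>m 1\<^sub>m K) ((1 / real n) \<cdot>\<^sub>m (transpose_mat G * G))"
    and G_hi: "loewner_le ((1 / real n) \<cdot>\<^sub>m (transpose_mat G * G)) (m_hi \<cdot>\<^sub>m 1\<^sub>m K)"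
    and G'_lo: "loewner_le (m_lo \<cdot>\<^sub>m 1\<^sub>m K) ((1 / real n) \<cdot>\<^sub>m (transpose_mat G' * G'))"
    and G'_hi: "loewner_le ((1 / real n) \<cdot>\<^sub>m (transpose_mat G' * G')) (m_hi \<cdot>\<^sub>m 1\<^sub>m K)"
  shows "frob_norm (inv_sqrt_mat (transpose_mat G * G) - inv_sqrt_mat (transpose_mat G' * G'))
      \<le> sqrt m_hi / (m_lo * sqrt m_lo) / real n * frob_norm (G - G')"
    and "frob_norm (G * inv_sqrt_mat (transpose_mat G * G) - G' * inv_sqrt_mat (transpose_mat G' * G'))
      \<le> (1 + m_hi / m_lo) / sqrt m_lo / sqrt (real n) * frob_norm (G - G')"
proof -
  have "0 < n" \<comment> \<open>for \<open>n = 0\<close> the factor \<open>1 / real n\<close> is \<open>0\<close>, violating the lower bound\<close>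
  proof (rule ccontr)
    let ?e = "unit_vec K 0"
    assume "\<not> 0 < n"
    then have "m_lo * (?e \<bullet> ?e) \<le> ?e \<bullet> ((0 \<cdot>\<^sub>m (transpose_mat G * G)) *\<^sub>v ?e)"
      using G_lo G loewner_le_scalar_left_iff[of "0 \<cdot>\<^sub>m (transpose_mat G * G)" K] by simp
    then show False
      using K m G by (simp add: smult_mat_mult_mat_vec)
  qed
  define c L where "c = sqrt (real n * m_lo)" and "L = sqrt (real n * m_hi)"
  have c: "0 < c" and c2: "c\<^sup>2 = real n * m_lo" and L2: "L\<^sup>2 = real n * m_hi" and L: "0 \<le> L"
    using \<open>0 < n\<close> m by (simp_all add: c_def L_def)
  have bounds: "loewner_le (c\<^sup>2 \<cdot>\<^sub>m 1\<^sub>m K) (transpose_mat H * H) \<and> op_norm_le H L"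
    if H: "H \<in> carrier_mat n K" and lo: "loewner_le (m_lo \<cdot>\<^sub>m 1\<^sub>m K) ((1 / real n) \<cdot>\<^sub>m (transpose_mat H * H))"
      and hi: "loewner_le ((1 / real n) \<cdot>\<^sub>m (transpose_mat H * H)) (m_hi \<cdot>\<^sub>m 1\<^sub>m K)" for H
    using loewner_le_rescale(1)[OF _ lo] loewner_le_rescale(2)[OF _ hi] op_norm_le_gram[OF H _ L] \<open>0 < n\<close>
    by (simp add: c2 L2)
  have "L / c ^ 3 = sqrt m_hi / (m_lo * sqrt m_lo) / real n"
    and "1 / c + L\<^sup>2 / c ^ 3 = (1 + m_hi / m_lo) / sqrt m_lo / sqrt (real n)"
    using \<open>0 < n\<close> m by (simp_all add: c_def L_def power3_eq_cube real_sqrt_mult field_simps)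
  then show "frob_norm (inv_sqrt_mat (transpose_mat G * G) - inv_sqrt_mat (transpose_mat G' * G'))
      \<le> sqrt m_hi / (m_lo * sqrt m_lo) / real n * frob_norm (G - G')"
    and "frob_norm (G * inv_sqrt_mat (transpose_mat G * G) - G' * inv_sqrt_mat (transpose_mat G' * G'))
      \<le> (1 + m_hi / m_lo) / sqrt m_lo / sqrt (real n) * frob_norm (G - G')"
    using frob_norm_inv_sqrt_gram_diff_le[OF G G' _ _ _ _ c] frob_norm_polar_factor_diff_le[OF G G' _ _ _ _ c]
      bounds[OF G G_lo G_hi] bounds[OF G' G'_lo G'_hi] by metis+
qed

theorem lemmaS5p4:
  fixes K :: nat and m_lo m_hi :: real
  assumes "K \<ge> 1" and "0 < m_lo" and "m_lo \<le> m_hi"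
  shows "\<exists>L1 L2. L1 > 0 \<and> L2 > 0 \<and>
    (\<forall>(n::nat) (G::real mat) (Gt::real mat).
       G \<in> carrier_mat n K \<longrightarrow> Gt \<in> carrier_mat n K \<longrightarrow>
       loewner_le (m_lo \<cdot>\<^sub>m 1\<^sub>m K) ((1 / real n) \<cdot>\<^sub>m (transpose_mat G * G)) \<longrightarrow>
       loewner_le ((1 / real n) \<cdot>\<^sub>m (transpose_mat G * G)) (m_hi \<cdot>\<^sub>m 1\<^sub>m K) \<longrightarrow>
       loewner_le (m_lo \<cdot>\<^sub>m 1\<^sub>m K) ((1 / real n) \<cdot>\<^sub>m (transpose_mat Gt * Gt)) \<longrightarrow>
       loewner_le ((1 / real n) \<cdot>\<^sub>m (transpose_mat Gt * Gt)) (m_hi \<cdot>\<^sub>m 1\<^sub>m K) \<longrightarrow>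
       frob_norm (inv_sqrt_mat (transpose_mat G * G) - inv_sqrt_mat (transpose_mat Gt * Gt))
         \<le> L1 / real n * frob_norm (G - Gt) \<and>
       frob_norm (G * inv_sqrt_mat (transpose_mat G * G) - Gt * inv_sqrt_mat (transpose_mat Gt * Gt))
         \<le> L2 / sqrt (real n) * frob_norm (G - Gt))"
proof (intro exI conjI allI impI)
  show "0 < sqrt m_hi / (m_lo * sqrt m_lo)" and "0 < (1 + m_hi / m_lo) / sqrt m_lo"
    using assms by (simp_all add: add_pos_nonneg)
qed (use inv_sqrt_gram_lipschitz[OF assms] in blast)+

end
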